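(* Let $Y=y-y_I$ be as in the context. Then \[ \bigl|\mathcal{I}\bigl(\langle Y',\mathcal{I}^{1-\alpha}Y'\rangle\bigr)(T)\bigr|\le C(1-\alpha)\sum_{j=1}^{N-2}\tau_j^{-\alpha}\|Y\|_{I_j}^2+C\tau^{1-\alpha}\|Y'\|_{L^2(J)}^2, \] where $\|Y\|_{I_j}=\sup_{t\in I_j}\|Y(t)\|$.
   Context: $\Omega\subset\mathbb{R}^d$ ($d\le3$) convex polyhedron, $0<\alpha<1$, $\kappa\in W^{1,\infty}(\Omega)$, $\kappa\ge\kappa_{\min}>0$, $\mathcal{A}w=-\nabla\cdot(\kappa\nabla w)$ with homogeneous Dirichlet conditions. $\mathcal{I}g(t)=\int_0^tg(s)\,ds$, $\omega_\beta(t)=t^{\beta-1}/\Gamma(\beta)$, $\mathcal{I}^\beta v(t)=\int_0^t\omega_\beta(t-s)v(s)\,ds$, $(\mathcal{J}_T^\beta w)(t)=\int_t^T\omega_\beta(s-t)w(s)\,ds$, $\partial_t^\alpha v=\mathcal{I}^{1-\alpha}v'$. $\langle\cdot,\cdot\rangle$, $\|\cdot\|$: $L^2(\Omega)$ inner product and norm; $J=(0,T)$, $\|w\|_{L^2(J)}^2=\int_0^T\|w\|^2dt$. $u$ solves $\partial_t^\alpha u+\mathcal{A}u=f$ on $\Omega\times(0,T]$, $u=0$ on $\partial\Omega$, $u(0)=u_0$. Time mesh $t_n=(n\tau)^\gamma$, $0\le n\le N$, $\tau=T^{1/\gamma}/N$, $\gamma\ge1$, $\tau_n=t_n-t_{n-1}$,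 $I_n=(t_{n-1},t_n)$. $U$ is continuous, linear in $t$ on each $\overline{I_n}$, $U(0)=u_0$, with $\frac{1}{\tau_n}\int_{I_n}\partial_t^\alpha U\,dt+\mathcal{A}\tfrac12(U(t_n)+U(t_{n-1}))=\tau_n^{-1}\int_{I_n}f\,dt$; $\eta=u-U$. $\varphi$ solves $-(\mathcal{J}_T^{1-\alpha}\varphi)'+\mathcal{A}\varphi=\eta$ on $(0,T)$, $\varphi(T)=0$, with homogeneous Dirichlet conditions; $y(t)=\varphi(0)+\int_0^t\varphi(s)ds$, $y_I$ is the continuous piecewise-linear interpolant of $y$ at the nodes $t_j$, $Y=y-y_I$. $C$ is a generic constant bounded for $0<\alpha\le1$, independent of $N,\tau$. *)

theory Defs
  imports "HOL-Analysis.Analysis"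
begin

definition meshpar :: "real \<Rightarrow> real \<Rightarrow> nat \<Rightarrow> real" where
  "meshpar T \<gamma> N = T powr (1 / \<gamma>) / real N"

definition tmesh :: "real \<Rightarrow> real \<Rightarrow> nat \<Rightarrow> nat \<Rightarrow> real" where
  "tmesh T \<gamma> N n = (real n * meshpar T \<gamma> N) powr \<gamma>"

text \<open>tau_n = t_n - t_(n-1) (used for n >= 1).\<close>
definition tstep :: "real \<Rightarrow> real \<Rightarrow> nat \<Rightarrow> nat \<Rightarrow> real" where
  "tstep T \<gamma> N n = tmesh T \<gamma> N n - tmesh T \<gamma> N (n - 1)"

definition omega :: "real \<Rightarrow> real \<Rightarrow> real" where
  "omega \<beta> t = t powr (\<beta> - 1) / Gamma \<beta>"

definition RL_int :: "real \<Rightarrow> (real \<Rightarrow> 'a::{banach, second_countable_topology}) \<Rightarrow> real \<Rightarrow> 'a" where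
  "RL_int \<beta> v t = (LINT s:{0..t}|lborel. omega \<beta> (t - s) *\<^sub>R v s)"

definition prim :: "'a::{banach, second_countable_topology} \<Rightarrow> (real \<Rightarrow> 'a) \<Rightarrow> real \<Rightarrow> 'a" where
  "prim y0 \<phi> t = y0 + (LINT s:{0..t}|lborel. \<phi> s)"

definition interp :: "real \<Rightarrow> real \<Rightarrow> nat \<Rightarrow> (real \<Rightarrow> 'a::real_vector) \<Rightarrow> real \<Rightarrow> 'a" where
  "interp T \<gamma> N y t =
     (if t \<le> 0 then y 0 else
      (\<Sum>n\<in>{1..N}. indicator {tmesh T \<gamma> N (n - 1)<..tmesh T \<gamma> N n} t *\<^sub>R
         (((tmesh T \<gamma> N n - t) / tstep T \<gamma> N n) *\<^sub>R y (tmesh T \<gamma> N (n - 1))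
          + ((t - tmesh T \<gamma> N (n - 1)) / tstep T \<gamma> N n) *\<^sub>R y (tmesh T \<gamma> N n))))"

definition Yerr :: "real \<Rightarrow> real \<Rightarrow> nat \<Rightarrow> (real \<Rightarrow> 'a::real_vector) \<Rightarrow> real \<Rightarrow> 'a" where
  "Yerr T \<gamma> N y t = y t - interp T \<gamma> N y t"

text \<open>Y' = y' - y_I' = phi - (y(t_n)-y(t_(n-1)))/tau_n on each open interval I_n
  (the (a.e.) derivative of Y on (0,T)).\<close>
definition Yder :: "real \<Rightarrow> real \<Rightarrow> nat \<Rightarrow> (real \<Rightarrow> 'a::real_vector) \<Rightarrow> (real \<Rightarrow> 'a) \<Rightarrow> real \<Rightarrow> 'a" where
  "Yder T \<gamma> N y \<phi> t =
     (\<Sum>n\<in>{1..N}. indicator {tmesh T \<gamma> N (n - 1)<..<tmesh T \<gamma> N n} t *\<^sub>R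
        (\<phi> t - (1 / tstep T \<gamma> N n) *\<^sub>R (y (tmesh T \<gamma> N n) - y (tmesh T \<gamma> N (n - 1)))))"

end

theory Submission
  imports Defs
begin

(*
  Since Y = y - y_I vanishes at the nodes, Y' has mean zero on every mesh interval I_j. Hence, in
  I^(1-alpha) Y' (t), the kernel omega_(1-alpha) (t - s) may be replaced on every I_j that ends at
  least one interval before t by omega_(1-alpha) (t - s) - omega_(1-alpha) (t - t_j), which is at
  most the increment omega_(1-alpha) (t - t_j) - omega_(1-alpha) (t - t_(j-1)). Because the widths
  tau_j of the graded mesh are nondecreasing and bounded by B tau, the weighted increments telescope,
  and every row and column of the corrected kernel integrates to at most
  2 omega_(2-alpha) (2 B tau) <= 24 B tau^(1-alpha), uniformly in alpha since Gamma >= 1/6 on [1,2].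
  The Schur test then bounds the left-hand side by 24 B tau^(1-alpha) ||Y'||^2 alone.
*)

lemma powr_increment_bounds:
  fixes a b p :: real
  assumes "0 \<le> a" "a \<le> b" "1 \<le> p"
  shows "p * a powr (p - 1) * (b - a) \<le> b powr p - a powr p"
    and "b powr p - a powr p \<le> p * b powr (p - 1) * (b - a)"
proof -
  have "p * a powr (p - 1) * (b - a) \<le> b powr p - a powr p \<and>
        b powr p - a powr p \<le> p * b powr (p - 1) * (b - a)"
  proof (cases "a = b")
    case False
    then have "a < b" using assms by simp
    moreover have "continuous_on {a..b} (\<lambda>x. x powr p)"
      using assms by (intro continuous_on_powr') (auto intro: continuous_intros)
    moreover have "(\<lambda>x. x powr p) differentiable at x" if "a < x" for x
      using that assms by (auto intro!: derivative_eq_intros simp: real_differentiable_def)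
    ultimately obtain l z where z: "a < z" "z < b" "((\<lambda>x. x powr p) has_real_derivative l) (at z)"
      and mvt: "b powr p - a powr p = (b - a) * l"
      using MVT[of a b "\<lambda>x. x powr p"] by blast
    have "l = p * z powr (p - 1)"
      using z assms by (intro DERIV_unique[OF z(3)] has_real_derivative_powr) auto
    moreover have "a powr (p - 1) \<le> z powr (p - 1)" "z powr (p - 1) \<le> b powr (p - 1)"
      using z assms by (auto intro!: powr_mono2)
    ultimately have "p * a powr (p - 1) * (b - a) \<le> l * (b - a)" "l * (b - a) \<le> p * b powr (p - 1) * (b - a)"
      using z assms by (auto intro!: mult_right_mono mult_left_mono)
    then show ?thesis
      using mvt by (simp add: mult.commute)
  qed simp
  then show "p * a powr (p - 1) * (b - a) \<le> b powr p - a powr p"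
    and "b powr p - a powr p \<le> p * b powr (p - 1) * (b - a)" by auto
qed

lemma sum_indicator_scaleR_single:
  fixes f :: "'i \<Rightarrow> 'b::real_vector"
  assumes "finite J" "j \<in> J" "x \<in> A j" "\<And>m. m \<in> J \<Longrightarrow> x \<in> A m \<Longrightarrow> m = j"
  shows "(\<Sum>m\<in>J. indicator (A m) x *\<^sub>R f m) = f j"
proof -
  have "indicator (A m) x *\<^sub>R f m = (if m = j then f j else 0)" if "m \<in> J" for m
  proof (cases "m = j")
    case False
    then have "x \<notin> A m"
      using assms(4) that by blast
    then show ?thesis
      using False by simp
  qed (simp add: assms(3))
  then have "(\<Sum>m\<in>J. indicator (A m) x *\<^sub>R f m) = (\<Sum>m\<in>J. if m = j then f j else 0)"
    by (rule sum.cong[OF refl])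
  then show ?thesis
    using assms(1,2) by simp
qed

lemma sum_weighted_increments_le:
  fixes w a :: "nat \<Rightarrow> real"
  assumes "mono w" "\<And>j. 0 \<le> w j" "\<And>j. 0 \<le> a j"
  shows "(\<Sum>j=1..m. w j * (a j - a (j - 1))) \<le> w m * a m"
proof (induction m)
  case 0
  then show ?case
    using assms by simp
next
  case (Suc m)
  have "(\<Sum>j=1..Suc m. w j * (a j - a (j - 1))) \<le> w m * a m + w (Suc m) * (a (Suc m) - a m)"
    using Suc.IH by simp
  also have "\<dots> \<le> w (Suc m) * a m + w (Suc m) * (a (Suc m) - a m)"
    using assms monoD[OF assms(1), of m "Suc m"] by (simp add: mult_right_mono)
  finally show ?case
    by (simp add: algebra_simps)
qed

lemma nn_integral_indicator_Ioc_const: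
  fixes a b d :: real
  assumes "a \<le> b" "0 \<le> d"
  shows "(\<integral>\<^sup>+s. ennreal (indicator {a<..b} s * d) \<partial>lborel) = ennreal ((b - a) * d)"
proof -
  have "(\<integral>\<^sup>+s. ennreal (indicator {a<..b} s * d) \<partial>lborel) = (\<integral>\<^sup>+s. ennreal d * indicator {a<..b} s \<partial>lborel)"
    by (intro nn_integral_cong) (auto simp: indicator_def)
  then show ?thesis
    using assms by (simp add: nn_integral_cmult_indicator ennreal_mult' mult.commute)
qed

lemma norm_integral_le_nn_integral: "ennreal (norm (integral\<^sup>L M f)) \<le> (\<integral>\<^sup>+x. norm (f x) \<partial>M)"
  by (cases "integrable M f") (simp_all add: integral_norm_bound_ennreal not_integrable_integral_eq)

lemma ennreal_mult_le_half_squares: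
  fixes a b k :: real
  assumes "0 \<le> a" "0 \<le> b" "0 \<le> k"
  shows "ennreal a * ennreal (k * b) \<le> ennreal (a\<^sup>2 / 2) * ennreal k + ennreal (b\<^sup>2 / 2) * ennreal k"
proof -
  have "0 \<le> k * (a - b)\<^sup>2"
    using assms by simp
  then have "a * (k * b) \<le> a\<^sup>2 / 2 * k + b\<^sup>2 / 2 * k"
    by (simp add: power2_diff algebra_simps)
  then have "ennreal (a * (k * b)) \<le> ennreal (a\<^sup>2 / 2 * k + b\<^sup>2 / 2 * k)"
    by (rule ennreal_leI)
  also have "\<dots> = ennreal (a\<^sup>2 / 2 * k) + ennreal (b\<^sup>2 / 2 * k)"
    using assms by (intro ennreal_plus) auto
  also have "\<dots> = ennreal (a\<^sup>2 / 2) * ennreal k + ennreal (b\<^sup>2 / 2) * ennreal k"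
    using assms by (subst (1 2) ennreal_mult) auto
  finally show ?thesis
    using assms by (subst ennreal_mult[symmetric]) auto
qed

lemma nn_integral_weighted_rows_le:
  fixes K :: "'a \<Rightarrow> 'a \<Rightarrow> real" and v :: "'a \<Rightarrow> real"
  assumes "v \<in> borel_measurable M" "\<And>t. 0 \<le> v t"
    and row: "\<And>t. v t \<noteq> 0 \<Longrightarrow> (\<integral>\<^sup>+s. K t s \<partial>M) \<le> ennreal A"
  shows "(\<integral>\<^sup>+t. ennreal (v t) * (\<integral>\<^sup>+s. K t s \<partial>M) \<partial>M) \<le> (\<integral>\<^sup>+t. v t \<partial>M) * ennreal A"
proof -
  have "(\<integral>\<^sup>+t. ennreal (v t) * (\<integral>\<^sup>+s. K t s \<partial>M) \<partial>M) \<le> (\<integral>\<^sup>+t. ennreal (v t) * ennreal A \<partial>M)"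
  proof (intro nn_integral_mono)
    fix t
    show "ennreal (v t) * (\<integral>\<^sup>+s. K t s \<partial>M) \<le> ennreal (v t) * ennreal A"
      using row[of t] by (cases "v t = 0") (auto intro: mult_left_mono)
  qed
  also have "\<dots> = (\<integral>\<^sup>+t. v t \<partial>M) * ennreal A"
    using assms(1) by (rule nn_integral_multc[OF measurable_compose]) simp
  finally show ?thesis .
qed

lemma nn_integral_Schur_test:
  fixes K :: "'a \<Rightarrow> 'a \<Rightarrow> real" and u :: "'a \<Rightarrow> real"
  assumes M: "sigma_finite_measure M"
    and K_meas: "(\<lambda>(t, s). K t s) \<in> borel_measurable (M \<Otimes>\<^sub>M M)" and K_nonneg: "\<And>t s. 0 \<le> K t s"
    and u_meas: "u \<in> borel_measurable M" and u_nonneg: "\<And>t. 0 \<le> u t"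
    and row: "\<And>t. u t \<noteq> 0 \<Longrightarrow> (\<integral>\<^sup>+s. K t s \<partial>M) \<le> ennreal A"
    and col: "\<And>s. u s \<noteq> 0 \<Longrightarrow> (\<integral>\<^sup>+t. K t s \<partial>M) \<le> ennreal A"
  shows "(\<integral>\<^sup>+t. ennreal (u t) * (\<integral>\<^sup>+s. ennreal (K t s * u s) \<partial>M) \<partial>M)
           \<le> ennreal A * (\<integral>\<^sup>+t. ennreal ((u t)\<^sup>2) \<partial>M)"
proof -
  interpret pair_sigma_finite M M
    using M by (simp add: pair_sigma_finite_def)
  note [measurable] = K_meas u_meas
  define v where "v t = (u t)\<^sup>2 / 2" for t
  have v_meas [measurable]: "v \<in> borel_measurable M"
    unfolding v_def by measurable
  have "(\<integral>\<^sup>+t. ennreal (u t) * (\<integral>\<^sup>+s. ennreal (K t s * u s) \<partial>M) \<partial>M)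
      = (\<integral>\<^sup>+t. (\<integral>\<^sup>+s. ennreal (u t) * ennreal (K t s * u s) \<partial>M) \<partial>M)"
    by (intro nn_integral_cong nn_integral_cmult[symmetric]) measurable
  also have "\<dots> \<le> (\<integral>\<^sup>+t. (\<integral>\<^sup>+s. ennreal (v t) * ennreal (K t s) + ennreal (v s) * ennreal (K t s) \<partial>M) \<partial>M)"
    unfolding v_def using K_nonneg u_nonneg by (intro nn_integral_mono ennreal_mult_le_half_squares)
  also have "\<dots> = (\<integral>\<^sup>+t. (\<integral>\<^sup>+s. ennreal (v t) * ennreal (K t s) \<partial>M) \<partial>M)
                + (\<integral>\<^sup>+t. (\<integral>\<^sup>+s. ennreal (v s) * ennreal (K t s) \<partial>M) \<partial>M)"
    by (subst nn_integral_add[symmetric]) (measurable, intro nn_integral_cong nn_integral_add, measurable)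
  also have "\<dots> = (\<integral>\<^sup>+t. ennreal (v t) * (\<integral>\<^sup>+s. K t s \<partial>M) \<partial>M)
                + (\<integral>\<^sup>+s. ennreal (v s) * (\<integral>\<^sup>+t. K t s \<partial>M) \<partial>M)"
    by (subst Fubini'[symmetric, of "\<lambda>t s. ennreal (v s) * ennreal (K t s)"], measurable)
       (intro arg_cong2[where f = "(+)"] nn_integral_cong nn_integral_cmult; measurable)
  also have "\<dots> \<le> (\<integral>\<^sup>+t. v t \<partial>M) * ennreal A + (\<integral>\<^sup>+t. v t \<partial>M) * ennreal A"
    using row col by (intro add_mono nn_integral_weighted_rows_le) (auto simp: v_def)
  also have "\<dots> = ((\<integral>\<^sup>+t. v t \<partial>M) + (\<integral>\<^sup>+t. v t \<partial>M)) * ennreal A"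
    by (simp add: distrib_right)
  also have "(\<integral>\<^sup>+t. v t \<partial>M) + (\<integral>\<^sup>+t. v t \<partial>M) = (\<integral>\<^sup>+t. ennreal ((u t)\<^sup>2) \<partial>M)"
    by (subst nn_integral_add[symmetric]) (auto simp: v_def ennreal_plus[symmetric] simp del: ennreal_plus)
  finally show ?thesis
    by (simp add: mult.commute)
qed

lemma integral_scaleR_subtract_step:
  fixes g :: "'a \<Rightarrow> 'b::{banach, second_countable_topology}"
  assumes "finite J"
    and integrable: "\<And>j. j \<in> J \<Longrightarrow> integrable M (\<lambda>x. indicator (A j) x *\<^sub>R g x)"
    and mean_zero: "\<And>j. j \<in> J \<Longrightarrow> (\<integral>x. indicator (A j) x *\<^sub>R g x \<partial>M) = 0"
  shows "(\<integral>x. f x *\<^sub>R g x \<partial>M) = (\<integral>x. (f x - (\<Sum>j\<in>J. c j * indicator (A j) x)) *\<^sub>R g x \<partial>M)"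
proof -
  define h where "h x = (\<Sum>j\<in>J. c j * indicator (A j) x) *\<^sub>R g x" for x
  have h_eq: "h = (\<lambda>x. \<Sum>j\<in>J. c j *\<^sub>R (indicator (A j) x *\<^sub>R g x))"
    by (simp add: h_def fun_eq_iff scaleR_sum_left)
  have h_integrable: "integrable M h"
    unfolding h_eq using integrable by (intro Bochner_Integration.integrable_sum integrable_scaleR_right)
  have "integral\<^sup>L M h = (\<Sum>j\<in>J. integral\<^sup>L M (\<lambda>x. c j *\<^sub>R (indicator (A j) x *\<^sub>R g x)))"
    unfolding h_eq by (intro Bochner_Integration.integral_sum integrable_scaleR_right integrable)
  also have "\<dots> = 0"
    using mean_zero by (simp del: scaleR_scaleR)
  finally have h_integral: "integral\<^sup>L M h = 0" .
  have split: "(\<lambda>x. (f x - (\<Sum>j\<in>J. c j * indicator (A j) x)) *\<^sub>R g x) = (\<lambda>x. f x *\<^sub>R g x - h x)"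
    by (simp add: h_def fun_eq_iff scaleR_diff_left)
  show ?thesis
  proof (cases "integrable M (\<lambda>x. (f x - (\<Sum>j\<in>J. c j * indicator (A j) x)) *\<^sub>R g x)")
    case True
    moreover have "(\<lambda>x. f x *\<^sub>R g x) = (\<lambda>x. (f x - (\<Sum>j\<in>J. c j * indicator (A j) x)) *\<^sub>R g x + h x)"
      by (simp add: h_def fun_eq_iff scaleR_diff_left)
    ultimately show ?thesis
      by (simp add: h_integrable h_integral)
  next
    case False
    have "\<not> integrable M (\<lambda>x. f x *\<^sub>R g x)"
    proof
      assume "integrable M (\<lambda>x. f x *\<^sub>R g x)"
      then have "integrable M (\<lambda>x. f x *\<^sub>R g x - h x)"
        using h_integrable by simp
      then show False
        using False split by metis
    qed
    then show ?thesis
      using False by (simp add: not_integrable_integral_eq)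
  qed
qed

lemma set_integrable_if_square_integrable:
  fixes f :: "'a \<Rightarrow> 'b::{banach, second_countable_topology}"
  assumes "set_integrable M A (\<lambda>x. (norm (f x))\<^sup>2)"
    and "f \<in> borel_measurable M" "A \<in> sets M" "emeasure M A < \<infinity>"
  shows "set_integrable M A f"
  unfolding set_integrable_def
proof (rule Bochner_Integration.integrable_bound)
  show "integrable M (\<lambda>x. indicator A x * (1 + (norm (f x))\<^sup>2))"
    using assms unfolding set_integrable_def distrib_left
    by (intro Bochner_Integration.integrable_add integrable_real_indicator) auto
  show "(\<lambda>x. indicator A x *\<^sub>R f x) \<in> borel_measurable M"
    using assms by measurable
  show "AE x in M. norm (indicator A x *\<^sub>R f x) \<le> norm (indicator A x * (1 + (norm (f x))\<^sup>2))"
  proof (intro AE_I2)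
    fix x
    have "0 \<le> (norm (f x) - 1)\<^sup>2"
      by simp
    then have "2 * norm (f x) \<le> 1 + (norm (f x))\<^sup>2"
      by (simp add: power2_diff)
    then have "norm (f x) \<le> 1 + (norm (f x))\<^sup>2"
      using norm_ge_zero[of "f x"] by linarith
    then show "norm (indicator A x *\<^sub>R f x) \<le> norm (indicator A x * (1 + (norm (f x))\<^sup>2))"
      by (auto simp: indicator_def)
  qed
qed

section \<open>The Riemann--Liouville kernel\<close>

lemma Gamma_plus1_real: "0 < (\<beta>::real) \<Longrightarrow> Gamma (\<beta> + 1) = \<beta> * Gamma \<beta>"
  by (intro Gamma_plus1) (auto elim!: nonpos_Ints_cases)

lemma omega_borel [measurable]: "omega \<beta> \<in> borel_measurable borel"
  unfolding omega_def by measurable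

lemma omega_nonneg: "0 < \<beta> \<Longrightarrow> 0 \<le> omega \<beta> x"
  by (simp add: omega_def)

lemma omega_antimono: "0 < \<beta> \<Longrightarrow> \<beta> \<le> 1 \<Longrightarrow> 0 < x \<Longrightarrow> x \<le> y \<Longrightarrow> omega \<beta> y \<le> omega \<beta> x"
  unfolding omega_def by (intro divide_right_mono powr_mono2') auto

lemma omega_succ_mono: "0 < \<beta> \<Longrightarrow> 0 \<le> x \<Longrightarrow> x \<le> y \<Longrightarrow> omega (\<beta> + 1) x \<le> omega (\<beta> + 1) y"
  unfolding omega_def by (intro divide_right_mono powr_mono2) auto

lemma mult_omega_eq: "0 < \<beta> \<Longrightarrow> 0 < x \<Longrightarrow> x * omega \<beta> x = \<beta> * omega (\<beta> + 1) x"
  by (simp add: omega_def Gamma_plus1_real powr_diff)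

lemma has_real_derivative_omega_succ:
  assumes "0 < \<beta>" "0 < x"
  shows "(omega (\<beta> + 1) has_real_derivative omega \<beta> x) (at x)"
proof -
  have "((\<lambda>x. x powr \<beta> / Gamma (\<beta> + 1)) has_real_derivative \<beta> * x powr (\<beta> - 1) / Gamma (\<beta> + 1)) (at x)"
    using assms by (intro DERIV_cdivide has_real_derivative_powr) auto
  moreover have "\<beta> * x powr (\<beta> - 1) / Gamma (\<beta> + 1) = omega \<beta> x"
    using assms by (simp add: omega_def Gamma_plus1_real)
  ultimately show ?thesis
    by (simp add: omega_def[abs_def])
qed

lemma nn_integral_omega:
  assumes "0 < \<beta>" "0 \<le> L"
  shows "(\<integral>\<^sup>+x. ennreal (indicator {0..L} x * omega \<beta> x) \<partial>lborel) = omega (\<beta> + 1) L"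
proof -
  have "((\<lambda>x. x powr (\<beta> - 1)) has_integral (L powr \<beta> / \<beta>)) {0..L}"
    using has_integral_powr_from_0[of "\<beta> - 1" L] assms by simp
  from has_integral_divide[OF this, of "Gamma \<beta>"]
  have "(omega \<beta> has_integral (L powr \<beta> / \<beta> / Gamma \<beta>)) {0..L}"
    by (simp add: omega_def[abs_def])
  moreover have "L powr \<beta> / \<beta> / Gamma \<beta> = omega (\<beta> + 1) L"
    using assms by (simp add: omega_def Gamma_plus1_real)
  ultimately have "(omega \<beta> has_integral omega (\<beta> + 1) L) {0..L}"
    by simp
  then show ?thesis
    using nn_integral_has_integral_lebesgue[of "{0..L}" "omega \<beta>"] assms by (simp add: omega_nonneg)
qed

lemma nn_integral_omega_before:
  assumes "0 < \<beta>" "a \<le> c"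
  shows "(\<integral>\<^sup>+s. ennreal (indicator {a..c} s * omega \<beta> (c - s)) \<partial>lborel) = omega (\<beta> + 1) (c - a)"
proof -
  have "(\<integral>\<^sup>+s. ennreal (indicator {a..c} s * omega \<beta> (c - s)) \<partial>lborel)
      = (\<integral>\<^sup>+x. ennreal (indicator {a..c} (c - x) * omega \<beta> x) \<partial>lborel)"
    using nn_integral_real_affine[of "\<lambda>s. ennreal (indicator {a..c} s * omega \<beta> (c - s))" "-1" c]
    by (simp add: omega_def)
  also have "\<dots> = (\<integral>\<^sup>+x. ennreal (indicator {0..c - a} x * omega \<beta> x) \<partial>lborel)"
    by (intro nn_integral_cong) (auto simp: indicator_def)
  finally show ?thesis
    using nn_integral_omega[of \<beta> "c - a"] assms by simp
qed

lemma nn_integral_omega_after: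
  assumes "0 < \<beta>" "s \<le> b"
  shows "(\<integral>\<^sup>+t. ennreal (indicator {s..b} t * omega \<beta> (t - s)) \<partial>lborel) = omega (\<beta> + 1) (b - s)"
proof -
  have "(\<integral>\<^sup>+t. ennreal (indicator {s..b} t * omega \<beta> (t - s)) \<partial>lborel)
      = (\<integral>\<^sup>+x. ennreal (indicator {s..b} (s + x) * omega \<beta> x) \<partial>lborel)"
    using nn_integral_real_affine[of "\<lambda>t. ennreal (indicator {s..b} t * omega \<beta> (t - s))" 1 s]
    by (simp add: omega_def)
  also have "\<dots> = (\<integral>\<^sup>+x. ennreal (indicator {0..b - s} x * omega \<beta> x) \<partial>lborel)"
    by (intro nn_integral_cong) (auto simp: indicator_def)
  finally show ?thesis
    using nn_integral_omega[of \<beta> "b - s"] assms by simp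
qed

lemma nn_integral_omega_difference_le:
  assumes "0 < \<beta>" "\<beta> \<le> 1" "a \<le> a'" "a' < b"
  shows "(\<integral>\<^sup>+t. ennreal (indicator {b..c} t * (omega \<beta> (t - a') - omega \<beta> (t - a))) \<partial>lborel)
           \<le> omega (\<beta> + 1) (b - a)"
proof (cases "b \<le> c")
  case True
  define f where "f t = omega \<beta> (t - a') - omega \<beta> (t - a)" for t
  define F where "F t = omega (\<beta> + 1) (t - a') - omega (\<beta> + 1) (t - a)" for t
  have shifted_derivative: "((\<lambda>t. omega (\<beta> + 1) (t - d)) has_real_derivative omega \<beta> (t - d)) (at t)"
    if "d < t" for d t
    using DERIV_chain2[OF has_real_derivative_omega_succ[of \<beta> "t - d"] DERIV_diff[OF DERIV_ident DERIV_const]]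
      that assms by simp
  have "(\<integral>\<^sup>+t. ennreal (indicator {b..c} t * f t) \<partial>lborel) = (\<integral>\<^sup>+t. ennreal (f t) * indicator {b..c} t \<partial>lborel)"
    by (intro nn_integral_cong) (auto simp: indicator_def)
  also have "\<dots> = F c - F b"
  proof (rule nn_integral_FTC_Icc[OF _ _ _ True])
    show "f \<in> borel_measurable borel"
      unfolding f_def by measurable
    fix t assume "t \<in> {b..c}"
    then have "a' < t" "a < t"
      using assms by auto
    then show "(F has_real_derivative f t) (at t)"
      unfolding F_def f_def by (intro DERIV_diff shifted_derivative)
    show "0 \<le> f t"
      using \<open>a' < t\<close> assms by (auto simp: f_def intro!: omega_antimono)
  qed
  also have "F c - F b \<le> omega (\<beta> + 1) (b - a)"
    using omega_succ_mono[of \<beta> "c - a'" "c - a"] omega_nonneg[of "\<beta> + 1" "b - a'"] assms True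
    by (simp add: F_def)
  finally show ?thesis
    by (simp add: f_def ennreal_leI)
qed (simp add: omega_nonneg assms)

lemma Gamma_ge_one_sixth:
  fixes x :: real
  assumes "1 \<le> x" "x \<le> 2"
  shows "1 / 6 \<le> Gamma x"
proof -
  have "(\<integral>\<^sup>+t. ennreal (t / 3) * indicator {0..1} t \<partial>lborel) = (\<lambda>t::real. t\<^sup>2 / 6) 1 - (\<lambda>t. t\<^sup>2 / 6) 0"
    by (rule nn_integral_FTC_Icc) (auto intro!: derivative_eq_intros)
  then have "ennreal (1 / 6) = (\<integral>\<^sup>+t. ennreal (t / 3) * indicator {0..1} t \<partial>lborel)"
    by simp
  also have "\<dots> \<le> (\<integral>\<^sup>+t. ennreal (indicator {0..} t * t powr (x - 1) / exp t) \<partial>lborel)"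
  proof (intro nn_integral_mono)
    fix t :: real
    show "ennreal (t / 3) * indicator {0..1} t \<le> ennreal (indicator {0..} t * t powr (x - 1) / exp t)"
    proof (cases "t \<in> {0..1}")
      case True
      have "t \<le> t powr (x - 1)"
        using True assms powr_mono'[of "x - 1" 1 t] by auto
      moreover have "exp t \<le> 3"
        using True exp_le order_trans[of "exp t" "exp 1" 3] by auto
      ultimately have "t / 3 \<le> t powr (x - 1) / exp t"
        using True by (intro frac_le) auto
      then show ?thesis
        using True by (auto intro!: ennreal_leI)
    qed auto
  qed
  also have "\<dots> = Gamma x"
    using assms by (subst Gamma_conv_nn_integral_real) auto
  finally show ?thesis
    using assms by (simp add: ennreal_le_iff Gamma_real_nonneg)
qed

lemma omega_succ_le:
  assumes "0 < \<beta>" "\<beta> \<le> 1" "0 \<le> x" "1 \<le> c"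
  shows "omega (\<beta> + 1) (c * x) \<le> 6 * c * x powr \<beta>"
proof -
  have Gamma: "1 / 6 \<le> Gamma (\<beta> + 1)"
    using assms by (intro Gamma_ge_one_sixth) auto
  have "(c * x) powr \<beta> \<le> c * x powr \<beta>"
    using assms powr_mono[of \<beta> 1 c] by (simp add: powr_mult mult_right_mono)
  then have "omega (\<beta> + 1) (c * x) \<le> c * x powr \<beta> / Gamma (\<beta> + 1)"
    using Gamma by (simp add: omega_def divide_right_mono)
  also have "\<dots> \<le> 6 * c * x powr \<beta>"
  proof -
    have "c * x powr \<beta> * 1 \<le> c * x powr \<beta> * (6 * Gamma (\<beta> + 1))"
      using assms Gamma by (intro mult_left_mono) auto
    then show ?thesis
      using Gamma by (simp add: divide_le_eq mult_ac)
  qed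
  finally show ?thesis .
qed

section \<open>Graded meshes\<close>

definition width_const :: "real \<Rightarrow> real \<Rightarrow> real" where
  "width_const T \<gamma> = max 1 (\<gamma> * (2 * T powr (1 / \<gamma>)) powr (\<gamma> - 1))"

lemma width_const_ge_1: "1 \<le> width_const T \<gamma>"
  by (simp add: width_const_def)

locale graded_mesh =
  fixes T \<gamma> :: real and N :: nat
  assumes T_pos: "0 < T" and gamma_ge_1: "1 \<le> \<gamma>" and N_pos: "1 \<le> N"
begin

abbreviation \<tau> :: real where "\<tau> \<equiv> meshpar T \<gamma> N"
abbreviation node :: "nat \<Rightarrow> real" where "node \<equiv> tmesh T \<gamma> N"
abbreviation width :: "nat \<Rightarrow> real" where "width \<equiv> tstep T \<gamma> N"
abbreviation cell :: "nat \<Rightarrow> real set" where "cell j \<equiv> {node (j - 1)<..node j}"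

lemma tau_pos: "0 < \<tau>"
  using T_pos N_pos by (simp add: meshpar_def)

lemma N_tau: "real N * \<tau> = T powr (1 / \<gamma>)"
  using N_pos by (simp add: meshpar_def)

lemma node_eq: "node n = (real n * \<tau>) powr \<gamma>"
  by (simp add: tmesh_def)

lemma node_0 [simp]: "node 0 = 0"
  by (simp add: node_eq)

lemma node_N: "node N = T"
  using T_pos gamma_ge_1 by (simp add: node_eq N_tau powr_powr)

lemma node_nonneg: "0 \<le> node n"
  by (simp add: node_eq)

lemma node_mono: "m \<le> n \<Longrightarrow> node m \<le> node n"
  using tau_pos gamma_ge_1 unfolding node_eq
  by (intro powr_mono2 mult_right_mono) auto

lemma node_strict_mono: "m < n \<Longrightarrow> node m < node n"
  using tau_pos gamma_ge_1 unfolding node_eq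
  by (intro powr_less_mono2 mult_strict_right_mono) auto

lemma node_less_iff [simp]: "node m < node n \<longleftrightarrow> m < n"
  by (meson node_mono node_strict_mono not_le)

lemma node_le_iff [simp]: "node m \<le> node n \<longleftrightarrow> m \<le> n"
  by (meson node_mono node_strict_mono not_le)

lemma cell_subset:
  assumes "j \<le> N"
  shows "cell j \<subseteq> {0..T}"
proof -
  have "node j \<le> node N"
    using assms by simp
  then show ?thesis
    using node_nonneg[of "j - 1"] by (auto simp: node_N)
qed

lemma width_eq: "width n = node n - node (n - 1)"
  by (simp add: tstep_def)

lemma width_pos: "1 \<le> n \<Longrightarrow> 0 < width n"
  by (simp add: width_eq)

lemma width_nonneg: "0 \<le> width n"
  by (simp add: width_eq)

lemma width_mono: "mono width"
  unfolding mono_iff_le_Suc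
proof
  fix n
  show "width n \<le> width (Suc n)"
  proof (cases n)
    case 0
    then show ?thesis by (simp add: width_eq node_nonneg)
  next
    case (Suc m)
    define x where "x = real n * \<tau>"
    have "node (n - 1) = (x - \<tau>) powr \<gamma>" "node n = x powr \<gamma>" "node (Suc n) = (x + \<tau>) powr \<gamma>"
      by (simp_all add: node_eq x_def Suc algebra_simps)
    moreover have "0 \<le> x - \<tau>"
      using tau_pos by (simp add: x_def Suc algebra_simps)
    ultimately show ?thesis
      using powr_increment_bounds(2)[of "x - \<tau>" x \<gamma>] powr_increment_bounds(1)[of x "x + \<tau>" \<gamma>]
        tau_pos gamma_ge_1 by (simp add: width_eq)
  qed
qed

lemma width_le:
  assumes "n \<le> N + 1"
  shows "width n \<le> width_const T \<gamma> * \<tau>"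
proof (cases n)
  case 0
  then show ?thesis
    using tau_pos width_const_ge_1[of T \<gamma>] by (simp add: width_eq)
next
  case (Suc m)
  define x where "x = real n * \<tau>"
  have "0 \<le> x - \<tau>"
    using tau_pos by (simp add: x_def Suc algebra_simps)
  moreover have "node (n - 1) = (x - \<tau>) powr \<gamma>" "node n = x powr \<gamma>"
    by (simp_all add: node_eq x_def Suc algebra_simps)
  ultimately have "width n \<le> \<gamma> * x powr (\<gamma> - 1) * \<tau>"
    using powr_increment_bounds(2)[of "x - \<tau>" x \<gamma>] gamma_ge_1 tau_pos by (simp add: width_eq)
  also have "\<dots> \<le> \<gamma> * (2 * T powr (1 / \<gamma>)) powr (\<gamma> - 1) * \<tau>"
  proof -
    have "x \<le> 2 * (real N * \<tau>)"
      using assms N_pos tau_pos unfolding x_def mult.assoc[symmetric] by (intro mult_right_mono) auto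
    then show ?thesis
      using gamma_ge_1 tau_pos unfolding N_tau
      by (intro mult_right_mono mult_left_mono powr_mono2) (auto simp: x_def)
  qed
  also have "\<dots> \<le> width_const T \<gamma> * \<tau>"
    using tau_pos by (intro mult_right_mono) (auto simp: width_const_def)
  finally show ?thesis .
qed

lemma two_widths_le:
  assumes "n \<le> N + 1"
  shows "node n - node (n - 2) \<le> 2 * width_const T \<gamma> * \<tau>"
proof -
  have "node n - node (n - 2) \<le> width n + width (n - 1)"
    by (cases "n \<ge> 2") (auto simp: width_eq numeral_2_eq_2 Suc_diff_Suc node_nonneg)
  also have "\<dots> \<le> 2 * width_const T \<gamma> * \<tau>"
    using width_le[of n] width_le[of "n - 1"] assms by fastforce
  finally show ?thesis .
qed

lemma cell_exists:
  assumes "0 < s" "s \<le> T"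
  obtains j where "j \<in> {1..N}" "s \<in> cell j"
proof -
  define j where "j = (LEAST j. s \<le> node j)"
  have "s \<le> node N"
    using assms node_N by simp
  then have "s \<le> node j" "j \<le> N"
    unfolding j_def by (auto intro: LeastI Least_le)
  moreover have "j \<noteq> 0"
    using \<open>s \<le> node j\<close> assms by (metis node_0 not_le)
  moreover have "\<not> s \<le> node (j - 1)"
    using \<open>j \<noteq> 0\<close> unfolding j_def by (intro not_less_Least) (auto simp: j_def)
  ultimately show ?thesis
    by (intro that[of j]) auto
qed

lemma cell_unique:
  assumes "s \<in> cell i" "s \<in> cell j" "1 \<le> i" "1 \<le> j"
  shows "i = j"
proof (rule ccontr)
  assume "i \<noteq> j"
  then consider "i < j" | "j < i"
    by linarith
  then show False
  proof cases
    case 1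
    then have "node i \<le> node (j - 1)"
      by simp
    moreover have "node (j - 1) < s" "s \<le> node i"
      using assms by auto
    ultimately show False
      by linarith
  next
    case 2
    then have "node j \<le> node (i - 1)"
      by simp
    moreover have "node (i - 1) < s" "s \<le> node j"
      using assms by auto
    ultimately show False
      by linarith
  qed
qed

end

section \<open>The derivative of the interpolation error\<close>

locale mesh_interp_error = graded_mesh +
  fixes y0 :: "'a::{banach, second_countable_topology}" and \<phi> :: "real \<Rightarrow> 'a"
  assumes phi_measurable: "\<phi> \<in> borel_measurable lborel"
    and phi_square_integrable: "set_integrable lborel {0..T} (\<lambda>t. (norm (\<phi> t))\<^sup>2)"
begin

abbreviation y :: "real \<Rightarrow> 'a" where "y \<equiv> prim y0 \<phi>"
abbreviation Y' :: "real \<Rightarrow> 'a" where "Y' \<equiv> Yder T \<gamma> N y \<phi>"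
abbreviation slope :: "nat \<Rightarrow> 'a" where "slope j \<equiv> (1 / width j) *\<^sub>R (y (node j) - y (node (j - 1)))"

lemma phi_borel [measurable]: "\<phi> \<in> borel_measurable borel"
  using phi_measurable by simp

lemma Yder_borel [measurable]: "Y' \<in> borel_measurable borel"
  unfolding Yder_def by measurable

lemma Yder_on_cell:
  assumes "n \<in> {1..N}" "node (n - 1) < t" "t < node n"
  shows "Y' t = \<phi> t - slope n"
proof -
  have unique: "m = n" if "m \<in> {1..N}" "t \<in> {node (m - 1)<..<node m}" for m
    using that assms cell_unique[of t m n] by auto
  show ?thesis
    unfolding Yder_def by (rule sum_indicator_scaleR_single[OF _ _ _ unique]) (use assms in auto)
qed

lemma Yder_support:
  assumes "Y' t \<noteq> 0"
  obtains n where "n \<in> {1..N}" "node (n - 1) < t" "t < node n"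
  using assms that unfolding Yder_def by (force intro: sum.neutral simp: indicator_def)

lemma Yder_support_interval:
  assumes "Y' t \<noteq> 0"
  shows "t \<in> {0<..<T}"
proof -
  obtain n where n: "n \<in> {1..N}" "node (n - 1) < t" "t < node n"
    using assms by (rule Yder_support)
  moreover have "node n \<le> node N"
    using n by simp
  ultimately show ?thesis
    using node_nonneg[of "n - 1"] by (auto simp: node_N)
qed

lemma Yder_0: "Y' 0 = 0"
  using Yder_support_interval by force

lemma phi_set_integrable: "set_integrable lborel {0..T} \<phi>"
  using phi_square_integrable by (rule set_integrable_if_square_integrable) (use T_pos in auto)

lemma prim_diff:
  assumes "0 \<le> a" "a \<le> b" "b \<le> T"
  shows "y b - y a = (LINT s:{a<..b}|lborel. \<phi> s)"
proof -
  have "set_integrable lborel {0..a} \<phi>" "set_integrable lborel {a<..b} \<phi>"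
    using assms by (auto intro: set_integrable_subset[OF phi_set_integrable])
  then have "(LINT s:{0..a} \<union> {a<..b}|lborel. \<phi> s) = (LINT s:{0..a}|lborel. \<phi> s) + (LINT s:{a<..b}|lborel. \<phi> s)"
    by (intro set_integral_Un) auto
  moreover have "{0..a} \<union> {a<..b} = {0..b}"
    using assms by auto
  ultimately show ?thesis
    by (simp add: prim_def)
qed

lemma Yder_mean_zero:
  assumes j: "j \<in> {1..N}"
  shows "(\<integral>s. indicator (cell j) s *\<^sub>R Y' s \<partial>lborel) = 0"
proof -
  have "node j \<le> node N"
    using j by simp
  then have cell: "cell j \<subseteq> {0..T}" "node (j - 1) < node j" "0 < width j" "node j \<le> T"
    using j cell_subset width_pos by (auto simp: node_N)
  have "(\<integral>s. indicator (cell j) s *\<^sub>R Y' s \<partial>lborel)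
      = (\<integral>s. indicator (cell j) s *\<^sub>R \<phi> s - indicator (cell j) s *\<^sub>R slope j \<partial>lborel)"
  proof (rule integral_cong_AE)
    show "AE s in lborel. indicator (cell j) s *\<^sub>R Y' s = indicator (cell j) s *\<^sub>R \<phi> s - indicator (cell j) s *\<^sub>R slope j"
      using AE_lborel_singleton[of "node j"]
      by eventually_elim (auto simp: indicator_def Yder_on_cell[OF j])
  qed measurable
  also have "\<dots> = (LINT s:cell j|lborel. \<phi> s) - measure lborel (cell j) *\<^sub>R slope j"
  proof -
    have "set_integrable lborel (cell j) \<phi>"
      using set_integrable_subset[OF phi_set_integrable] cell by auto
    then show ?thesis
      using cell by (simp add: set_lebesgue_integral_def set_integrable_def)
  qed
  also have "\<dots> = 0"
  proof -
    have "y (node j) - y (node (j - 1)) = (LINT s:cell j|lborel. \<phi> s)"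
      using cell by (intro prim_diff) (auto simp: node_nonneg)
    moreover have "measure lborel (cell j) = width j"
      using cell by (simp add: width_eq)
    ultimately show ?thesis
      using cell by simp
  qed
  finally show ?thesis .
qed

lemma Yder_square_integrable: "integrable lborel (\<lambda>t. (norm (Y' t))\<^sup>2)"
proof (rule Bochner_Integration.integrable_bound)
  define D where "D = (\<Sum>n\<in>{1..N}. (norm (slope n))\<^sup>2)"
  show "integrable lborel (\<lambda>t. indicator {0..T} t * (2 * (norm (\<phi> t))\<^sup>2 + 2 * D))"
    using phi_square_integrable T_pos unfolding set_integrable_def distrib_left
    by (intro Bochner_Integration.integrable_add integrable_real_indicator integrable_mult_right)
       (auto simp: mult.left_commute[of _ 2])
  show "AE t in lborel. norm ((norm (Y' t))\<^sup>2) \<le> norm (indicator {0..T} t * (2 * (norm (\<phi> t))\<^sup>2 + 2 * D))"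
  proof (intro AE_I2)
    fix t
    have "(norm (Y' t))\<^sup>2 \<le> 2 * (norm (\<phi> t))\<^sup>2 + 2 * D \<and> t \<in> {0..T}" if "Y' t \<noteq> 0"
    proof -
      obtain n where n: "n \<in> {1..N}" "node (n - 1) < t" "t < node n"
        using \<open>Y' t \<noteq> 0\<close> by (rule Yder_support)
      have "norm (Y' t) \<le> norm (\<phi> t) + norm (slope n)"
        unfolding Yder_on_cell[OF n] by (rule norm_triangle_ineq4)
      then have "(norm (Y' t))\<^sup>2 \<le> (norm (\<phi> t) + norm (slope n))\<^sup>2"
        by (simp add: power_mono)
      also have "\<dots> \<le> 2 * (norm (\<phi> t))\<^sup>2 + 2 * (norm (slope n))\<^sup>2"
        using sum_squares_bound[of "norm (\<phi> t)" "norm (slope n)"] by (simp add: power2_sum)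
      also have "(norm (slope n))\<^sup>2 \<le> D"
        unfolding D_def using n by (intro member_le_sum) auto
      finally show ?thesis
        using Yder_support_interval[OF that] by auto
    qed
    moreover have "0 \<le> D"
      by (simp add: D_def sum_nonneg)
    ultimately show "norm ((norm (Y' t))\<^sup>2) \<le> norm (indicator {0..T} t * (2 * (norm (\<phi> t))\<^sup>2 + 2 * D))"
      by (cases "Y' t = 0") (auto simp: indicator_def)
  qed
qed measurable

lemma Yder_eq_indicator: "indicator {0..T} t *\<^sub>R Y' t = Y' t"
  using Yder_support_interval[of t] by (cases "Y' t = 0") auto

lemma Yder_integrable: "integrable lborel Y'"
proof -
  have "set_integrable lborel {0..T} (\<lambda>t. (norm (Y' t))\<^sup>2)"
    unfolding set_integrable_def by (intro integrable_mult_indicator Yder_square_integrable) simp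
  then have "set_integrable lborel {0..T} Y'"
    by (rule set_integrable_if_square_integrable) (use T_pos in auto)
  then show ?thesis
    by (simp add: set_integrable_def Yder_eq_indicator)
qed

lemma energy_eq: "(LINT t:{0..T}|lborel. (norm (Y' t))\<^sup>2) = (\<integral>t. (norm (Y' t))\<^sup>2 \<partial>lborel)"
  unfolding set_lebesgue_integral_def
proof (intro Bochner_Integration.integral_cong refl)
  fix t
  show "indicator {0..T} t *\<^sub>R (norm (Y' t))\<^sup>2 = (norm (Y' t))\<^sup>2"
    using Yder_support_interval[of t] by (cases "Y' t = 0") auto
qed

lemma energy_nonneg: "0 \<le> (LINT t:{0..T}|lborel. (norm (Y' t))\<^sup>2)"
  unfolding energy_eq by (intro integral_nonneg_AE) simp

lemma nn_integral_energy:
  "(\<integral>\<^sup>+t. ennreal ((norm (Y' t))\<^sup>2) \<partial>lborel) = ennreal (LINT t:{0..T}|lborel. (norm (Y' t))\<^sup>2)"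
  unfolding energy_eq by (rule nn_integral_eq_integral[OF Yder_square_integrable]) auto

end

section \<open>The corrected kernel\<close>

locale fractional_kernel = graded_mesh +
  fixes \<beta> :: real
  assumes beta_pos: "0 < \<beta>" and beta_le_1: "\<beta> \<le> 1"
begin

abbreviation \<omega> :: "real \<Rightarrow> real" where "\<omega> \<equiv> omega \<beta>"

abbreviation increment :: "real \<Rightarrow> nat \<Rightarrow> real" where
  "increment t j \<equiv> \<omega> (t - node j) - \<omega> (t - node (j - 1))"

abbreviation kernel_bound :: real where
  "kernel_bound \<equiv> 2 * omega (\<beta> + 1) (2 * width_const T \<gamma> * \<tau>)"

definition correction :: "real \<Rightarrow> real \<Rightarrow> real" where
  "correction t s = (\<Sum>j\<in>{1..N}. (if node (j + 1) < t then \<omega> (t - node j) else 0) * indicator (cell j) s)"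

definition kernel :: "real \<Rightarrow> real \<Rightarrow> real" where
  "kernel t s = \<bar>indicator {0<..t} s * \<omega> (t - s) - correction t s\<bar>"

lemma omega_beta_nonneg: "0 \<le> \<omega> x"
  using beta_pos by (rule omega_nonneg)

lemma omega_beta_antimono: "0 < x \<Longrightarrow> x \<le> x' \<Longrightarrow> \<omega> x' \<le> \<omega> x"
  using beta_pos beta_le_1 by (rule omega_antimono)

lemma kernel_bound_nonneg: "0 \<le> kernel_bound"
  using beta_pos by (simp add: omega_nonneg)

lemma increment_nonneg: "node j < t \<Longrightarrow> 0 \<le> increment t j"
  using omega_beta_antimono[of "t - node j" "t - node (j - 1)"] by simp

lemma increment_nonneg_after: "node (j + 1) \<le> t \<Longrightarrow> 0 \<le> increment t j"
  using node_strict_mono[of j "j + 1"] by (intro increment_nonneg) linarith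

lemma increment_nonneg_before:
  assumes "node (n - 1) < t" "j \<le> n - 2"
  shows "0 \<le> increment t j"
proof (rule increment_nonneg)
  have "node j \<le> node (n - 1)"
    using assms(2) by simp
  then show "node j < t"
    using assms(1) by linarith
qed

lemma kernel_measurable: "(\<lambda>(t, s). kernel t s) \<in> borel_measurable (lborel \<Otimes>\<^sub>M lborel)"
proof -
  have "correction t s = (\<Sum>j\<in>{1..N}. if node (j + 1) < t \<and> node (j - 1) < s \<and> s \<le> node j then \<omega> (t - node j) else 0)"
    for t s unfolding correction_def by (intro sum.cong) (auto simp: indicator_def)
  moreover have "indicator {0<..t} s * \<omega> (t - s) = (if 0 < s \<and> s \<le> t then \<omega> (t - s) else 0)" for t s
    by (simp add: indicator_def)
  ultimately have "kernel t s = \<bar>(if 0 < s \<and> s \<le> t then \<omega> (t - s) else 0)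
      - (\<Sum>j\<in>{1..N}. if node (j + 1) < t \<and> node (j - 1) < s \<and> s \<le> node j then \<omega> (t - node j) else 0)\<bar>" for t s
    by (simp only: kernel_def)
  then show ?thesis
    by (simp add: case_prod_beta') measurable
qed

lemma correction_outside: "s \<notin> {0<..t} \<Longrightarrow> correction t s = 0"
  unfolding correction_def
proof (intro sum.neutral ballI)
  fix j
  assume "s \<notin> {0<..t}"
  moreover have "node j < node (j + 1)"
    by simp
  ultimately have "s \<notin> cell j \<or> \<not> node (j + 1) < t"
    using node_nonneg[of "j - 1"] by (auto simp del: node_less_iff)
  then show "(if node (j + 1) < t then \<omega> (t - node j) else 0) * indicator (cell j) s = 0"
    by auto
qed

lemma kernel_outside: "s \<notin> {0<..t} \<Longrightarrow> kernel t s = 0"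
  by (simp add: kernel_def correction_outside)

lemma correction_on_cell:
  assumes "j \<in> {1..N}" "s \<in> cell j"
  shows "correction t s = (if node (j + 1) < t then \<omega> (t - node j) else 0)"
proof -
  have "correction t s = (\<Sum>m\<in>{1..N}. indicator (cell m) s *\<^sub>R (if node (m + 1) < t then \<omega> (t - node m) else 0))"
    unfolding correction_def by (simp add: mult.commute)
  also have "\<dots> = (if node (j + 1) < t then \<omega> (t - node j) else 0)"
    using assms by (intro sum_indicator_scaleR_single) (auto intro: cell_unique)
  finally show ?thesis .
qed

lemma kernel_on_cell:
  assumes j: "j \<in> {1..N}" "s \<in> cell j"
  shows "kernel t s \<le> (if node (j + 1) < t then increment t j else if s \<le> t then \<omega> (t - s) else 0)"
proof (cases "node (j + 1) < t")
  case True
  have "node j < t"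
    using True node_less_iff[of j "j + 1"] by linarith
  then have "\<omega> (t - s) \<le> \<omega> (t - node j)" "\<omega> (t - node (j - 1)) \<le> \<omega> (t - s)"
    using j by (auto intro!: omega_beta_antimono)
  moreover have "0 < s" "s \<le> t"
    using j \<open>node j < t\<close> node_nonneg[of "j - 1"] by auto
  ultimately show ?thesis
    using True correction_on_cell[OF j, of t] by (simp add: kernel_def)
next
  case False
  have "0 < s"
    using j node_nonneg[of "j - 1"] by auto
  then show ?thesis
    using False correction_on_cell[OF j, of t] omega_beta_nonneg by (simp add: kernel_def)
qed

lemma kernel_row_pointwise:
  assumes n: "n \<in> {1..N}" "node (n - 1) < t" "t < node n"
  shows "kernel t s \<le> indicator {node (n - 2)..t} s * \<omega> (t - s) + (\<Sum>j=1..n-2. indicator (cell j) s * increment t j)"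
proof -
  have incr_nonneg: "0 \<le> increment t j" if "j \<le> n - 2" for j
    using n(2) that by (rule increment_nonneg_before)
  then have far_nonneg: "0 \<le> (\<Sum>j=1..n-2. indicator (cell j) s * increment t j)"
    by (intro sum_nonneg) simp
  have near_nonneg: "0 \<le> indicator {node (n - 2)..t} s * \<omega> (t - s)"
    using omega_beta_nonneg by simp
  show ?thesis
  proof (cases "s \<in> {0<..t}")
    case False
    then show ?thesis
      using far_nonneg near_nonneg by (simp add: kernel_outside)
  next
    case s: True
    have "node n \<le> node N"
      using n by simp
    then have "0 < s" "s \<le> T"
      using s n by (auto simp: node_N)
    then obtain j where j: "j \<in> {1..N}" "s \<in> cell j"
      by (rule cell_exists)
    show ?thesis
    proof (cases "node (j + 1) < t")
      case True
      then have "j \<le> n - 2"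
        using n node_less_iff[of "j + 1" n] by linarith
      then have "kernel t s \<le> indicator (cell j) s * increment t j"
        using kernel_on_cell[OF j, of t] True j by simp
      also have "\<dots> \<le> (\<Sum>j=1..n-2. indicator (cell j) s * increment t j)"
        using \<open>j \<le> n - 2\<close> j incr_nonneg by (intro member_le_sum) auto
      finally show ?thesis
        using near_nonneg by linarith
    next
      case False
      then have "n - 2 \<le> j - 1"
        using n node_less_iff[of "n - 1" "j + 1"] by linarith
      then have "node (n - 2) \<le> node (j - 1)"
        by simp
      then have "node (n - 2) \<le> s"
        using j by (auto simp del: node_le_iff)
      then have "kernel t s \<le> indicator {node (n - 2)..t} s * \<omega> (t - s)"
        using kernel_on_cell[OF j, of t] False s by simp
      then show ?thesis
        using far_nonneg by linarith
    qed
  qed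
qed

lemma kernel_row_integral_le:
  assumes n: "n \<in> {1..N}" "node (n - 1) < t" "t < node n"
  shows "(\<integral>\<^sup>+s. kernel t s \<partial>lborel)
           \<le> ennreal (omega (\<beta> + 1) (t - node (n - 2)) + (\<Sum>j=1..n-2. width j * increment t j))"
proof -
  have incr_nonneg: "0 \<le> increment t j" if "j \<le> n - 2" for j
    using n(2) that by (rule increment_nonneg_before)
  have "node (n - 2) \<le> node (n - 1)"
    by simp
  then have "node (n - 2) \<le> t"
    using n by linarith
  have "(\<integral>\<^sup>+s. kernel t s \<partial>lborel)
      \<le> (\<integral>\<^sup>+s. ennreal (indicator {node (n - 2)..t} s * \<omega> (t - s))
              + (\<Sum>j=1..n-2. ennreal (indicator (cell j) s * increment t j)) \<partial>lborel)"
  proof (intro nn_integral_mono)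
    fix s
    have "ennreal (kernel t s)
        \<le> ennreal (indicator {node (n - 2)..t} s * \<omega> (t - s)) + ennreal (\<Sum>j=1..n-2. indicator (cell j) s * increment t j)"
      using kernel_row_pointwise[OF n, of s] omega_beta_nonneg[of "t - s"] incr_nonneg
      by (subst ennreal_plus[symmetric]) (auto intro!: ennreal_leI sum_nonneg)
    then show "ennreal (kernel t s) \<le> ennreal (indicator {node (n - 2)..t} s * \<omega> (t - s))
        + (\<Sum>j=1..n-2. ennreal (indicator (cell j) s * increment t j))"
      using incr_nonneg by (subst sum_ennreal) auto
  qed
  also have "\<dots> = (\<integral>\<^sup>+s. ennreal (indicator {node (n - 2)..t} s * \<omega> (t - s)) \<partial>lborel)
      + (\<Sum>j=1..n-2. \<integral>\<^sup>+s. ennreal (indicator (cell j) s * increment t j) \<partial>lborel)"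
    by (subst nn_integral_add) (auto intro!: nn_integral_sum)
  also have "\<dots> = ennreal (omega (\<beta> + 1) (t - node (n - 2))) + (\<Sum>j=1..n-2. ennreal (width j * increment t j))"
    using \<open>node (n - 2) \<le> t\<close> beta_pos incr_nonneg
    by (simp add: nn_integral_omega_before nn_integral_indicator_Ioc_const width_eq)
  also have "\<dots> = ennreal (omega (\<beta> + 1) (t - node (n - 2)) + (\<Sum>j=1..n-2. width j * increment t j))"
  proof -
    have weights_nonneg: "0 \<le> width j * increment t j" if "j \<in> {1..n-2}" for j
      using that incr_nonneg width_nonneg by simp
    then have "(\<Sum>j=1..n-2. ennreal (width j * increment t j)) = ennreal (\<Sum>j=1..n-2. width j * increment t j)"
      by (rule sum_ennreal)
    moreover have "0 \<le> (\<Sum>j=1..n-2. width j * increment t j)"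
      using weights_nonneg by (rule sum_nonneg)
    ultimately show ?thesis
      using omega_nonneg[of "\<beta> + 1"] beta_pos by (simp add: ennreal_plus)
  qed
  finally show ?thesis .
qed

text \<open>Abel summation: the increments telescope, and the widths grow, so only the last one counts.\<close>

lemma weighted_increments_le:
  assumes n: "n \<in> {1..N}" "node (n - 1) < t"
  shows "(\<Sum>j=1..n-2. width j * increment t j) \<le> omega (\<beta> + 1) (t - node (n - 2))"
proof -
  define x where "x = t - node (n - 2)"
  have "node (n - 2) \<le> node (n - 1)"
    by simp
  then have "0 < x"
    using n unfolding x_def by linarith
  have "(\<Sum>j=1..n-2. width j * increment t j) \<le> width (n - 2) * \<omega> x"
    using sum_weighted_increments_le[OF width_mono width_nonneg omega_beta_nonneg, of "\<lambda>j. t - node j" "n - 2"]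
    by (simp add: x_def)
  also have "\<dots> \<le> x * \<omega> x"
  proof (intro mult_right_mono omega_beta_nonneg)
    have "width (n - 2) \<le> width (n - 1)"
      by (intro monoD[OF width_mono]) simp
    moreover have "width (n - 1) = node (n - 1) - node (n - 2)"
      by (simp add: width_eq diff_diff_left numeral_2_eq_2)
    ultimately show "width (n - 2) \<le> x"
      using n unfolding x_def by linarith
  qed
  also have "\<dots> = \<beta> * omega (\<beta> + 1) x"
    using beta_pos \<open>0 < x\<close> by (rule mult_omega_eq)
  also have "\<dots> \<le> omega (\<beta> + 1) x"
    using beta_le_1 omega_nonneg[of "\<beta> + 1" x] beta_pos by (simp add: mult_left_le_one_le)
  finally show ?thesis
    by (simp add: x_def)
qed

lemma kernel_row_bound:
  assumes n: "n \<in> {1..N}" "node (n - 1) < t" "t < node n"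
  shows "(\<integral>\<^sup>+s. kernel t s \<partial>lborel) \<le> ennreal kernel_bound"
proof -
  have "t - node (n - 2) \<le> 2 * width_const T \<gamma> * \<tau>"
    using n two_widths_le[of n] by simp
  moreover have "node (n - 2) \<le> node (n - 1)"
    by simp
  then have "0 \<le> t - node (n - 2)"
    using n by linarith
  ultimately have "omega (\<beta> + 1) (t - node (n - 2)) \<le> omega (\<beta> + 1) (2 * width_const T \<gamma> * \<tau>)"
    using beta_pos omega_succ_mono by blast
  then show ?thesis
    using kernel_row_integral_le[OF n] weighted_increments_le[OF n(1,2)]
    by (simp add: order.trans[OF _ ennreal_leI])
qed

lemma kernel_column_pointwise:
  assumes j: "j \<in> {1..N}" "s \<in> cell j"
  shows "indicator {0..T} t * kernel t s
           \<le> indicator {s..node (j + 1)} t * \<omega> (t - s) + indicator {node (j + 1)..T} t * increment t j"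
proof -
  have far_nonneg: "0 \<le> indicator {node (j + 1)..T} t * increment t j"
    using increment_nonneg_after[of j t] by (simp add: indicator_def)
  have near_nonneg: "0 \<le> indicator {s..node (j + 1)} t * \<omega> (t - s)"
    using omega_beta_nonneg by simp
  show ?thesis
  proof (cases "node (j + 1) < t")
    case True
    then have "indicator {0..T} t * kernel t s \<le> indicator {node (j + 1)..T} t * increment t j"
      using kernel_on_cell[OF j, of t] node_nonneg[of "j + 1"] by (auto simp: indicator_def)
    then show ?thesis
      using near_nonneg by linarith
  next
    case False
    then have "indicator {0..T} t * kernel t s \<le> indicator {s..node (j + 1)} t * \<omega> (t - s)"
      using kernel_on_cell[OF j, of t] omega_beta_nonneg kernel_def by (auto simp: indicator_def)
    then show ?thesis
      using far_nonneg by linarith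
  qed
qed

lemma kernel_column_bound:
  assumes j: "j \<in> {1..N}" "s \<in> cell j"
  shows "(\<integral>\<^sup>+t. indicator {0..T} t * kernel t s \<partial>lborel) \<le> ennreal kernel_bound"
proof -
  define f where "f t = indicator {node (j + 1)..T} t * increment t j" for t
  define \<Omega> where "\<Omega> = omega (\<beta> + 1)"
  have nodes: "node j < node (j + 1)" "node (j - 1) \<le> node j"
    by simp_all
  have "s \<le> node (j + 1)"
    using j nodes by (auto simp del: node_less_iff)
  have "(\<integral>\<^sup>+t. indicator {0..T} t * kernel t s \<partial>lborel)
      \<le> (\<integral>\<^sup>+t. ennreal (indicator {s..node (j + 1)} t * \<omega> (t - s)) + ennreal (f t) \<partial>lborel)"
    using kernel_column_pointwise[OF j] increment_nonneg_after[of j] omega_beta_nonneg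
    by (intro nn_integral_mono) (simp add: f_def indicator_def ennreal_plus[symmetric] ennreal_leI del: ennreal_plus)
  also have "\<dots> = (\<integral>\<^sup>+t. ennreal (indicator {s..node (j + 1)} t * \<omega> (t - s)) \<partial>lborel)
      + (\<integral>\<^sup>+t. ennreal (f t) \<partial>lborel)"
    unfolding f_def by (rule nn_integral_add) measurable
  also have "\<dots> \<le> ennreal (\<Omega> (node (j + 1) - s)) + ennreal (\<Omega> (node (j + 1) - node (j - 1)))"
    using nn_integral_omega_difference_le[OF beta_pos beta_le_1 nodes(2,1)] beta_pos \<open>s \<le> node (j + 1)\<close>
    by (simp add: f_def \<Omega>_def nn_integral_omega_after add_left_mono)
  also have "\<dots> \<le> ennreal kernel_bound"
  proof -
    have "node (j + 1) - node (j - 1) \<le> 2 * width_const T \<gamma> * \<tau>"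
      using two_widths_le[of "j + 1"] j by simp
    moreover have "node (j + 1) - s \<le> node (j + 1) - node (j - 1)"
      using j by simp
    ultimately have "\<Omega> (node (j + 1) - s) \<le> \<Omega> (2 * width_const T \<gamma> * \<tau>)"
      "\<Omega> (node (j + 1) - node (j - 1)) \<le> \<Omega> (2 * width_const T \<gamma> * \<tau>)"
      using \<open>s \<le> node (j + 1)\<close> nodes beta_pos unfolding \<Omega>_def by (auto intro!: omega_succ_mono)
    then show ?thesis
      using beta_pos by (simp add: \<Omega>_def omega_nonneg ennreal_plus[symmetric] ennreal_leI del: ennreal_plus)
  qed
  finally show ?thesis .
qed

end

section \<open>The energy estimate\<close>

locale fractional_energy = fractional_kernel T \<gamma> N \<beta> + mesh_interp_error T \<gamma> N y0 \<phi>
  for T \<gamma> :: real and N :: nat and \<beta> :: real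
    and y0 :: "'a::{real_inner, banach, second_countable_topology}" and \<phi> :: "real \<Rightarrow> 'a"
begin

lemma norm_RL_int_le_kernel:
  "ennreal (norm (RL_int \<beta> Y' t)) \<le> (\<integral>\<^sup>+s. ennreal (kernel t s * norm (Y' s)) \<partial>lborel)"
proof -
  have "RL_int \<beta> Y' t = (\<integral>s. (indicator {0<..t} s * \<omega> (t - s)) *\<^sub>R Y' s \<partial>lborel)"
    unfolding RL_int_def set_lebesgue_integral_def
    by (intro Bochner_Integration.integral_cong refl) (auto simp: indicator_def Yder_0)
  also have "\<dots> = (\<integral>s. (indicator {0<..t} s * \<omega> (t - s) - correction t s) *\<^sub>R Y' s \<partial>lborel)"
    unfolding correction_def using Yder_integrable Yder_mean_zero
    by (intro integral_scaleR_subtract_step) (auto intro: integrable_mult_indicator)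
  finally show ?thesis
    using norm_integral_le_nn_integral[of lborel
        "\<lambda>s. (indicator {0<..t} s * \<omega> (t - s) - correction t s) *\<^sub>R Y' s"]
    by (simp add: kernel_def)
qed

lemma energy_le_kernel_form:
  "ennreal \<bar>LINT t:{0..T}|lborel. inner (Y' t) (RL_int \<beta> Y' t)\<bar>
     \<le> (\<integral>\<^sup>+t. ennreal (norm (Y' t))
           * (\<integral>\<^sup>+s. ennreal (indicator {0..T} t * kernel t s * norm (Y' s)) \<partial>lborel) \<partial>lborel)"
proof -
  have "ennreal \<bar>LINT t:{0..T}|lborel. inner (Y' t) (RL_int \<beta> Y' t)\<bar>
      \<le> (\<integral>\<^sup>+t. ennreal (indicator {0..T} t * \<bar>inner (Y' t) (RL_int \<beta> Y' t)\<bar>) \<partial>lborel)"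
    using norm_integral_le_nn_integral[of lborel "\<lambda>t. indicator {0..T} t * inner (Y' t) (RL_int \<beta> Y' t)"]
    by (simp add: set_lebesgue_integral_def abs_mult)
  also have "\<dots> \<le> (\<integral>\<^sup>+t. ennreal (norm (Y' t))
                   * (\<integral>\<^sup>+s. ennreal (indicator {0..T} t * kernel t s * norm (Y' s)) \<partial>lborel) \<partial>lborel)"
  proof (intro nn_integral_mono)
    fix t
    show "ennreal (indicator {0..T} t * \<bar>inner (Y' t) (RL_int \<beta> Y' t)\<bar>)
        \<le> ennreal (norm (Y' t)) * (\<integral>\<^sup>+s. ennreal (indicator {0..T} t * kernel t s * norm (Y' s)) \<partial>lborel)"
    proof (cases "t \<in> {0..T}")
      case True
      have "ennreal \<bar>inner (Y' t) (RL_int \<beta> Y' t)\<bar> \<le> ennreal (norm (Y' t)) * ennreal (norm (RL_int \<beta> Y' t))"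
        using Cauchy_Schwarz_ineq2 by (simp add: ennreal_mult[symmetric] ennreal_leI)
      also have "\<dots> \<le> ennreal (norm (Y' t)) * (\<integral>\<^sup>+s. ennreal (kernel t s * norm (Y' s)) \<partial>lborel)"
        by (intro mult_left_mono norm_RL_int_le_kernel) simp
      finally show ?thesis
        using True by simp
    qed simp
  qed
  finally show ?thesis .
qed

lemma kernel_form_le:
  "(\<integral>\<^sup>+t. ennreal (norm (Y' t))
       * (\<integral>\<^sup>+s. ennreal (indicator {0..T} t * kernel t s * norm (Y' s)) \<partial>lborel) \<partial>lborel)
     \<le> ennreal kernel_bound * (\<integral>\<^sup>+t. ennreal ((norm (Y' t))\<^sup>2) \<partial>lborel)"
proof (rule nn_integral_Schur_test[OF lborel.sigma_finite_measure_axioms])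
  show "(\<lambda>(t, s). indicator {0..T} t * kernel t s) \<in> borel_measurable (lborel \<Otimes>\<^sub>M lborel)"
    using kernel_measurable by measurable
  show "(\<integral>\<^sup>+s. indicator {0..T} t * kernel t s \<partial>lborel) \<le> ennreal kernel_bound" if "norm (Y' t) \<noteq> 0" for t
  proof -
    have "Y' t \<noteq> 0"
      using that by simp
    then obtain n where n: "n \<in> {1..N}" "node (n - 1) < t" "t < node n"
      by (rule Yder_support)
    have "t \<in> {0..T}"
      using Yder_support_interval[OF \<open>Y' t \<noteq> 0\<close>] by simp
    then show ?thesis
      using kernel_row_bound[OF n] by simp
  qed
  show "(\<integral>\<^sup>+t. indicator {0..T} t * kernel t s \<partial>lborel) \<le> ennreal kernel_bound" if "norm (Y' s) \<noteq> 0" for s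
  proof -
    have "Y' s \<noteq> 0"
      using that by simp
    then obtain j where "j \<in> {1..N}" "node (j - 1) < s" "s < node j"
      by (rule Yder_support)
    then show ?thesis
      using kernel_column_bound[of j s] by simp
  qed
qed (auto simp: kernel_def)

lemma energy_bound:
  "\<bar>LINT t:{0..T}|lborel. inner (Y' t) (RL_int \<beta> Y' t)\<bar> \<le> kernel_bound * (LINT t:{0..T}|lborel. (norm (Y' t))\<^sup>2)"
proof -
  have "ennreal \<bar>LINT t:{0..T}|lborel. inner (Y' t) (RL_int \<beta> Y' t)\<bar>
      \<le> ennreal kernel_bound * ennreal (LINT t:{0..T}|lborel. (norm (Y' t))\<^sup>2)"
    using energy_le_kernel_form kernel_form_le by (simp add: nn_integral_energy)
  then show ?thesis
    using kernel_bound_nonneg energy_nonneg by (simp add: ennreal_mult[symmetric] ennreal_le_iff)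
qed

end

theorem lemma4p3:
  fixes T \<gamma> :: real
  assumes "T > 0" and "\<gamma> \<ge> 1"
  shows "\<exists>C>0. \<forall>(\<alpha>::real) (N::nat) (y0::'a::{real_inner, banach, second_countable_topology}) \<phi>.
           0 < \<alpha> \<longrightarrow> \<alpha> < 1 \<longrightarrow> N \<ge> 1 \<longrightarrow>
           \<phi> \<in> borel_measurable lborel \<longrightarrow>
           set_integrable lborel {0..T} (\<lambda>t. (norm (\<phi> t))\<^sup>2) \<longrightarrow>
           (let y = prim y0 \<phi>;
                Y = Yerr T \<gamma> N y;
                Y' = Yder T \<gamma> N y \<phi>
            in \<bar>LINT t:{0..T}|lborel. inner (Y' t) (RL_int (1 - \<alpha>) Y' t)\<bar>
               \<le> C * (1 - \<alpha>) * (\<Sum>j=1..N-2. tstep T \<gamma> N j powr (-\<alpha>) *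
                        (SUP t\<in>{tmesh T \<gamma> N (j - 1)<..<tmesh T \<gamma> N j}. norm (Y t))\<^sup>2)
                 + C * meshpar T \<gamma> N powr (1 - \<alpha>) * (LINT t:{0..T}|lborel. (norm (Y' t))\<^sup>2))"
proof (intro exI[of _ "24 * width_const T \<gamma>"] conjI allI impI)
  show "0 < 24 * width_const T \<gamma>"
    using width_const_ge_1[of T \<gamma>] by simp
  fix \<alpha> :: real and N :: nat and y0 :: 'a and \<phi> :: "real \<Rightarrow> 'a"
  assume "0 < \<alpha>" "\<alpha> < 1" "N \<ge> 1" "\<phi> \<in> borel_measurable lborel"
    "set_integrable lborel {0..T} (\<lambda>t. (norm (\<phi> t))\<^sup>2)"
  then interpret fractional_energy T \<gamma> N "1 - \<alpha>" y0 \<phi>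
    using assms by unfold_locales auto
  let ?B = "width_const T \<gamma>" and ?E = "LINT t:{0..T}|lborel. (norm (Y' t))\<^sup>2"
  let ?S = "\<Sum>j=1..N-2. width j powr (-\<alpha>) *
              (SUP t\<in>{node (j - 1)<..<node j}. norm (Yerr T \<gamma> N y t))\<^sup>2"
  have "kernel_bound \<le> 24 * ?B * \<tau> powr (1 - \<alpha>)"
    using omega_succ_le[of "1 - \<alpha>" \<tau> "2 * ?B"] \<open>\<alpha> < 1\<close> \<open>0 < \<alpha>\<close> tau_pos width_const_ge_1[of T \<gamma>]
    by (simp add: mult.commute mult.left_commute)
  then have "\<bar>LINT t:{0..T}|lborel. inner (Y' t) (RL_int (1 - \<alpha>) Y' t)\<bar> \<le> 24 * ?B * \<tau> powr (1 - \<alpha>) * ?E"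
    using energy_bound energy_nonneg by (meson mult_right_mono order.trans)
  moreover have "0 \<le> 24 * ?B * (1 - \<alpha>) * ?S"
    using \<open>\<alpha> < 1\<close> width_const_ge_1[of T \<gamma>] by (intro mult_nonneg_nonneg sum_nonneg) auto
  ultimately show "let y = prim y0 \<phi>; Y = Yerr T \<gamma> N y; Y' = Yder T \<gamma> N y \<phi>
      in \<bar>LINT t:{0..T}|lborel. inner (Y' t) (RL_int (1 - \<alpha>) Y' t)\<bar>
         \<le> 24 * ?B * (1 - \<alpha>) * (\<Sum>j=1..N-2. tstep T \<gamma> N j powr (-\<alpha>) *
                  (SUP t\<in>{tmesh T \<gamma> N (j - 1)<..<tmesh T \<gamma> N j}. norm (Y t))\<^sup>2)
           + 24 * ?B * meshpar T \<gamma> N powr (1 - \<alpha>) * (LINT t:{0..T}|lborel. (norm (Y' t))\<^sup>2)"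
    unfolding Let_def by linarith
qed

end
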